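(* Given a critical tuple $(\mathrm{Block},\mathrm{Gd},\mathrm{Bd})$ as input, the Gap algorithm returns an independent set $P\subseteq\mathcal{U}\setminus F$ such that $$\mathrm{OPT}(P)\ \ge\ \sum_{j\in\mathcal{B}}2^j\Big(\mathrm{uncov}\big(B_F(\mathrm{Bd}(j))\cup B_{\mathcal{U}\setminus F}(\mathrm{Block}(j)\setminus\{j\}),\,B_{\mathcal{U}\setminus F}(j)\big)-\mathrm{indep}\big(B_F(\mathrm{Gd}(j)),\,B_{\mathcal{U}\setminus F}(j)\big)\Big),$$ where $\mathcal{B}=\{i\in\mathbb{Z}:\mathrm{Block}(i)\neq\emptyset\}$.
   Context: $M=(\mathcal{U},\mathcal{I})$ is a matroid; $\mathrm{rank}(X)=\max\{|X'|:X'\subseteq X,X'\in\mathcal{I}\}$, $\mathrm{span}(X)=\{e:\mathrm{rank}(X\cup\{e\})=\mathrm{rank}(X)\}$, $\mathrm{OPT}(X)=\max\{\sum_{e\in X'}\mathrm{val}(e):X'\subseteq X,X'\in\mathcal{I}\}$, $\mathrm{uncov}(R,S)=\mathrm{rank}(R\cup S)-\mathrm{rank}(R)$, $\mathrm{indep}(R,S)=\mathrm{rank}(S\setminus\mathrm{span}(R))$. Standing assumption: elements of rank $0$ have value $0$ and every element of positive value has value $2^i$ for some $i\in\mathbb{Z}$. For $X\subseteq\mathcal{U}$: $B_X(i)=\{e\in X:\mathrm{val}(e)=2^i\}$, $B_X(I)=\bigcup_{i\in I}B_X(i)$. Logarithms base 2. $F\subseteq\mathcal{U}$ is the set of elements revealed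 in a first (observation) stage; afterwards the elements of $\mathcal{U}\setminus F$ are revealed one by one. Critical tuple: $(\mathrm{Block},\mathrm{Gd},\mathrm{Bd})$ where $\mathrm{Block},\mathrm{Gd},\mathrm{Bd}$ are maps from $\mathbb{Z}$ to subsets of $\mathbb{Z}$ such that for all $i\ge j$ with $\mathrm{Block}(i),\mathrm{Block}(j)$ nonempty: (1) $i\in\mathrm{Block}(i)$; (2) if $i>j$ then either $\mathrm{Block}(i)=\mathrm{Block}(j)$ or $\min\mathrm{Block}(i)>\max\mathrm{Block}(j)$; (3) if $\mathrm{Block}(i)=\mathrm{Block}(j)$ then $\mathrm{Gd}(i)=\mathrm{Gd}(j)$ and $\mathrm{Bd}(i)=\mathrm{Bd}(j)$; (4) $\mathrm{Block}(i)\cup\mathrm{Bd}(i)\subseteq\mathrm{Gd}(i)$; (5) if $\min\mathrm{Block}(i)>\max\mathrm{Block}(j)$ then $\mathrm{Bd}(i)\subseteq\mathrm{Gd}(i)\subseteq\mathrm{Bd}(j)\subseteq\mathrm{Gd}(j)$; (6) $\max\mathrm{Block}(i)<\min\mathrm{Bd}(i)$. Gap algorithm with input a critical tuple: start with $P=\emptyset$; immediately after each $e\in\mathcal{U}\setminus F$ is revealed (elements of value $0$ are ignored), let $\ell=\log\mathrm{val}(e)$; if $\mathrm{Block}(\ell)\neq\emptyset$, $e\in\mathrm{span}(B_F(\mathrm{Gd}(\ell)))$ and $e\notin\mathrm{span}(P\cup B_F(\mathrm{Bd}(\ell)))$, then add $e$ to $P$. Output $P$. *)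

theory Defs
  imports Complex_Main
begin

definition matroid :: "'a set \<Rightarrow> 'a set set \<Rightarrow> bool" where
  "matroid U \<I> \<longleftrightarrow> finite U \<and> (\<forall>X\<in>\<I>. X \<subseteq> U) \<and> {} \<in> \<I>
     \<and> (\<forall>X Y. Y \<in> \<I> \<and> X \<subseteq> Y \<longrightarrow> X \<in> \<I>)
     \<and> (\<forall>X\<in>\<I>. \<forall>Y\<in>\<I>. card X < card Y \<longrightarrow> (\<exists>e\<in>Y - X. insert e X \<in> \<I>))"

definition mrank :: "'a set set \<Rightarrow> 'a set \<Rightarrow> nat" where
  "mrank \<I> X = Max {card Y | Y. Y \<subseteq> X \<and> Y \<in> \<I>}"

definition mspan :: "'a set \<Rightarrow> 'a set set \<Rightarrow> 'a set \<Rightarrow> 'a set" where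
  "mspan U \<I> X = {e \<in> U. mrank \<I> (X \<union> {e}) = mrank \<I> X}"

definition OPT :: "'a set set \<Rightarrow> ('a \<Rightarrow> real) \<Rightarrow> 'a set \<Rightarrow> real" where
  "OPT \<I> val X = Max {(\<Sum>e\<in>Y. val e) | Y. Y \<subseteq> X \<and> Y \<in> \<I>}"

definition uncov :: "'a set set \<Rightarrow> 'a set \<Rightarrow> 'a set \<Rightarrow> int" where
  "uncov \<I> R S = int (mrank \<I> (R \<union> S)) - int (mrank \<I> R)"

definition indep_rk :: "'a set \<Rightarrow> 'a set set \<Rightarrow> 'a set \<Rightarrow> 'a set \<Rightarrow> nat" where
  "indep_rk U \<I> R S = mrank \<I> (S - mspan U \<I> R)"

definition bucket :: "('a \<Rightarrow> real) \<Rightarrow> 'a set \<Rightarrow> int \<Rightarrow> 'a set" where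
  "bucket val X i = {e \<in> X. val e = 2 powr (real_of_int i)}"

definition buckets :: "('a \<Rightarrow> real) \<Rightarrow> 'a set \<Rightarrow> int set \<Rightarrow> 'a set" where
  "buckets val X I = (\<Union>i\<in>I. bucket val X i)"

text \<open>"min A > max B" is rendered as: every element of A exceeds every element of B.\<close>
definition critical_tuple :: "(int \<Rightarrow> int set) \<Rightarrow> (int \<Rightarrow> int set) \<Rightarrow> (int \<Rightarrow> int set) \<Rightarrow> bool" where
  "critical_tuple Block Gd Bd \<longleftrightarrow>
    (\<forall>i j. i \<ge> j \<and> Block i \<noteq> {} \<and> Block j \<noteq> {} \<longrightarrow>
       i \<in> Block i
     \<and> (i > j \<longrightarrow> Block i = Block j \<or> (\<forall>a\<in>Block i. \<forall>b\<in>Block j. a > b))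
     \<and> (Block i = Block j \<longrightarrow> Gd i = Gd j \<and> Bd i = Bd j)
     \<and> Block i \<union> Bd i \<subseteq> Gd i
     \<and> ((\<forall>a\<in>Block i. \<forall>b\<in>Block j. a > b) \<longrightarrow> Bd i \<subseteq> Gd i \<and> Gd i \<subseteq> Bd j \<and> Bd j \<subseteq> Gd j)
     \<and> (\<forall>a\<in>Block i. \<forall>b\<in>Bd i. a < b))"

definition gap_step :: "'a set \<Rightarrow> 'a set set \<Rightarrow> ('a \<Rightarrow> real) \<Rightarrow> 'a set
    \<Rightarrow> (int \<Rightarrow> int set) \<Rightarrow> (int \<Rightarrow> int set) \<Rightarrow> (int \<Rightarrow> int set) \<Rightarrow> 'a \<Rightarrow> 'a set \<Rightarrow> 'a set" where
  "gap_step U \<I> val F Block Gd Bd e P =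
     (let l = \<lfloor>log 2 (val e)\<rfloor> in
      if val e \<noteq> 0 \<and> Block l \<noteq> {}
         \<and> e \<in> mspan U \<I> (buckets val F (Gd l))
         \<and> e \<notin> mspan U \<I> (P \<union> buckets val F (Bd l))
      then insert e P else P)"

definition gap_alg :: "'a set \<Rightarrow> 'a set set \<Rightarrow> ('a \<Rightarrow> real) \<Rightarrow> 'a set
    \<Rightarrow> (int \<Rightarrow> int set) \<Rightarrow> (int \<Rightarrow> int set) \<Rightarrow> (int \<Rightarrow> int set) \<Rightarrow> 'a list \<Rightarrow> 'a set" where
  "gap_alg U \<I> val F Block Gd Bd \<sigma> = fold (gap_step U \<I> val F Block Gd Bd) \<sigma> {}"

end

theory Submission
  imports Defs
begin

text \<open>
  Fix a level j whose block is non-empty and let P be the set accepted so far. Relative to j,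
  P splits into elements from lower blocks, which stay independent over B_F(Gd j), and the
  rest, which lie in the span of B_F(Gd j); those from higher blocks even lie in the span of
  B_F(Bd j). Consequently an element of B_{U-F}(j) spanned by B_F(Gd j) that the algorithm
  rejects is already spanned by B_F(Bd j) together with the accepted elements of its own block:
  the lower-block elements are skew and cannot help. So the part of B_{U-F}(j) inside the span
  of B_F(Gd j) raises the rank of B_F(Bd j) \<union> B_{U-F}(Block j - {j}) by at most |P \<inter> B(j)|,
  and the remaining part by at most indep(B_F(Gd j), B_{U-F}(j)). Since P is independent,
  OPT(P) = val(P) = \<Sum>_j 2^j |P \<inter> B(j)|.
\<close>

section \<open>Rank and closure in a matroid\<close>

locale finite_matroid =
  fixes U :: "'a set" and I :: "'a set set"
  assumes matroid: "matroid U I"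
begin

abbreviation rank :: "'a set \<Rightarrow> nat" where "rank \<equiv> mrank I"
abbreviation cl :: "'a set \<Rightarrow> 'a set" where "cl \<equiv> mspan U I"

lemma finite_ground: "finite U"
  using matroid by (simp add: matroid_def)

lemma indep_subset_ground: "Y \<in> I \<Longrightarrow> Y \<subseteq> U"
  using matroid by (simp add: matroid_def)

lemma indep_finite: "Y \<in> I \<Longrightarrow> finite Y"
  using indep_subset_ground finite_ground finite_subset by blast

lemma empty_indep: "{} \<in> I"
  using matroid by (simp add: matroid_def)

lemma indep_subset: "Y \<in> I \<Longrightarrow> X \<subseteq> Y \<Longrightarrow> X \<in> I"
  using matroid unfolding matroid_def by blast

lemma indep_augment: "X \<in> I \<Longrightarrow> Y \<in> I \<Longrightarrow> card X < card Y \<Longrightarrow> \<exists>e\<in>Y - X. insert e X \<in> I"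
  using matroid unfolding matroid_def by blast

lemma finite_indep_cards: "finite {card Y | Y. Y \<subseteq> X \<and> Y \<in> I}"
proof (rule finite_subset)
  show "{card Y | Y. Y \<subseteq> X \<and> Y \<in> I} \<subseteq> {0..card U}"
    using indep_subset_ground finite_ground card_mono by fastforce
qed simp

lemma card_le_rank: "Y \<subseteq> X \<Longrightarrow> Y \<in> I \<Longrightarrow> card Y \<le> rank X"
  unfolding mrank_def by (rule Max_ge[OF finite_indep_cards]) blast

lemma rank_attained: obtains Y where "Y \<subseteq> X" "Y \<in> I" "card Y = rank X"
proof -
  have "rank X \<in> {card Y | Y. Y \<subseteq> X \<and> Y \<in> I}"
    unfolding mrank_def using empty_indep by (intro Max_in finite_indep_cards) auto
  then show ?thesis using that by auto
qed

lemma rank_mono: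
  assumes "X \<subseteq> Y"
  shows "rank X \<le> rank Y"
proof -
  obtain Z where "Z \<subseteq> X" "Z \<in> I" "card Z = rank X" by (rule rank_attained)
  with assms show ?thesis using card_le_rank[of Z Y] by simp
qed

lemma rank_le_card:
  assumes "finite X"
  shows "rank X \<le> card X"
proof -
  obtain Z where "Z \<subseteq> X" "Z \<in> I" "card Z = rank X" by (rule rank_attained)
  with assms show ?thesis using card_mono[of X Z] by simp
qed

lemma rank_indep: "Y \<in> I \<Longrightarrow> rank Y = card Y"
  using card_le_rank[of Y Y] rank_le_card[OF indep_finite] by (simp add: le_antisym)

lemma indep_if_rank_eq_card:
  assumes "finite X" "rank X = card X"
  shows "X \<in> I"
proof -
  obtain Z where "Z \<subseteq> X" "Z \<in> I" "card Z = rank X" by (rule rank_attained)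
  with assms show ?thesis using card_subset_eq[of X Z] by simp
qed

lemma indep_extend_to_rank:
  "Y \<subseteq> X \<Longrightarrow> Y \<in> I \<Longrightarrow> \<exists>B. Y \<subseteq> B \<and> B \<subseteq> X \<and> B \<in> I \<and> card B = rank X"
proof (induction "rank X - card Y" arbitrary: Y rule: less_induct)
  case less
  show ?case
  proof (cases "card Y < rank X")
    case True
    obtain Z where Z: "Z \<subseteq> X" "Z \<in> I" "card Z = rank X" by (rule rank_attained)
    then obtain e where e: "e \<in> Z - Y" "insert e Y \<in> I"
      using indep_augment[OF less(3) Z(2)] True by auto
    have "card (insert e Y) = Suc (card Y)" using e indep_finite[OF less(3)] by simp
    then have "rank X - card (insert e Y) < rank X - card Y" using True by simp
    moreover have "insert e Y \<subseteq> X" using e Z(1) less(2) by blast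
    ultimately have "\<exists>B. insert e Y \<subseteq> B \<and> B \<subseteq> X \<and> B \<in> I \<and> card B = rank X"
      using e(2) by (rule less(1))
    then show ?thesis by blast
  next
    case False
    then have "card Y = rank X" using card_le_rank[OF less(2,3)] by simp
    then show ?thesis using less(2,3) by blast
  qed
qed

lemma rank_submodular: "rank (S \<union> T) + rank (S \<inter> T) \<le> rank S + rank T"
proof -
  obtain B0 where B0: "B0 \<subseteq> S \<inter> T" "B0 \<in> I" "card B0 = rank (S \<inter> T)"
    by (rule rank_attained)
  obtain B where B: "B0 \<subseteq> B" "B \<subseteq> S \<union> T" "B \<in> I" "card B = rank (S \<union> T)"
    using indep_extend_to_rank[of B0 "S \<union> T"] B0 by blast
  have fin: "finite B" using indep_finite B(3) .
  have "(B \<inter> S) \<union> (B \<inter> T) = B" "(B \<inter> S) \<inter> (B \<inter> T) = B \<inter> S \<inter> T"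
    using B(2) by auto
  then have "card (B \<inter> S) + card (B \<inter> T) = card B + card (B \<inter> S \<inter> T)"
    using card_Un_Int[of "B \<inter> S" "B \<inter> T"] fin by simp
  moreover have "card (B \<inter> S) \<le> rank S" "card (B \<inter> T) \<le> rank T"
    using card_le_rank indep_subset[OF B(3)] by auto
  moreover have "card B0 \<le> card (B \<inter> S \<inter> T)"
    using B B0 fin by (intro card_mono) auto
  ultimately show ?thesis using B B0 by linarith
qed

lemma rank_Un_le: "rank (X \<union> Y) \<le> rank X + rank Y"
  using rank_submodular[of X Y] by linarith

lemma rank_Un_le_card: "finite Q \<Longrightarrow> rank (X \<union> Q) \<le> rank X + card Q"
  using rank_Un_le[of X Q] rank_le_card[of Q] by linarith

lemma in_cl_iff: "e \<in> cl X \<longleftrightarrow> e \<in> U \<and> rank (insert e X) = rank X"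
  by (simp add: mspan_def)

lemma cl_subset_ground: "cl X \<subseteq> U"
  by (auto simp: in_cl_iff)

lemma mem_cl: "e \<in> U \<Longrightarrow> e \<in> X \<Longrightarrow> e \<in> cl X"
  by (simp add: in_cl_iff insert_absorb)

lemma cl_mono: "X \<subseteq> Y \<Longrightarrow> cl X \<subseteq> cl Y"
proof
  fix e assume XY: "X \<subseteq> Y" and e: "e \<in> cl X"
  have "rank (Y \<union> insert e X) + rank (Y \<inter> insert e X) \<le> rank Y + rank (insert e X)"
    by (rule rank_submodular)
  moreover have "Y \<union> insert e X = insert e Y" using XY by auto
  moreover have "rank X \<le> rank (Y \<inter> insert e X)" using XY by (intro rank_mono) auto
  moreover have "rank Y \<le> rank (insert e Y)" by (intro rank_mono) auto
  ultimately show "e \<in> cl Y" using e by (auto simp: in_cl_iff)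
qed

lemma rank_Un_cl:
  assumes Z: "Z \<subseteq> cl X"
  shows "rank (X \<union> Z) = rank X"
proof -
  have "finite Z" using Z cl_subset_ground by (rule finite_subset[OF order_trans finite_ground])
  then show ?thesis using Z
  proof (induction Z rule: finite_induct)
    case (insert z Z)
    then have "z \<in> cl (X \<union> Z)" using cl_mono[of X "X \<union> Z"] by blast
    then have "rank (insert z (X \<union> Z)) = rank (X \<union> Z)" by (simp add: in_cl_iff)
    then show ?case using insert by simp
  qed simp
qed

lemma cl_Un_cl:
  assumes Z: "Z \<subseteq> cl X"
  shows "cl (X \<union> Z) = cl X"
proof
  show "cl (X \<union> Z) \<subseteq> cl X"
  proof
    fix e assume e: "e \<in> cl (X \<union> Z)"
    have "Z \<subseteq> cl (insert e X)" using Z cl_mono[of X "insert e X"] by blast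
    then have "rank (insert e X \<union> Z) = rank (insert e X)" by (rule rank_Un_cl)
    then show "e \<in> cl X" using e rank_Un_cl[OF Z] by (simp add: in_cl_iff)
  qed
qed (rule cl_mono, blast)

lemma rank_insert_notin_cl: "e \<in> U \<Longrightarrow> e \<notin> cl X \<Longrightarrow> rank (insert e X) = Suc (rank X)"
  using rank_mono[of X "insert e X"] rank_Un_le_card[of "{e}" X]
  by (fastforce simp: in_cl_iff)

lemma indep_insert_notin_cl:
  assumes P: "P \<in> I" and e: "e \<in> U" "e \<notin> cl P"
  shows "insert e P \<in> I"
proof -
  have "e \<notin> P" using e mem_cl by blast
  then have "rank (insert e P) = card (insert e P)"
    using rank_insert_notin_cl[OF e] rank_indep[OF P] indep_finite[OF P] by simp
  then show ?thesis using indep_finite[OF P] by (simp add: indep_if_rank_eq_card)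
qed

text \<open>Q is skew to A \<union> X; an element of cl A therefore cannot use Q to get into the span of X.\<close>
lemma cl_skew_cancel:
  assumes AX: "rank (A \<union> X) = rank A" and AXQ: "rank (A \<union> X \<union> Q) = rank A + card Q"
    and Q: "finite Q" and eA: "e \<in> cl A" and eXQ: "e \<in> cl (X \<union> Q)"
  shows "e \<in> cl X"
proof -
  let ?S = "insert e (A \<union> X)" and ?T = "insert e (X \<union> Q)"
  have "rank (?S \<union> ?T) + rank (?S \<inter> ?T) \<le> rank ?S + rank ?T"
    by (rule rank_submodular)
  moreover have "rank (?S \<union> ?T) = rank A + card Q"
  proof -
    have "e \<in> cl (A \<union> X \<union> Q)" using eA cl_mono[of A "A \<union> X \<union> Q"] by blast
    moreover have "?S \<union> ?T = insert e (A \<union> X \<union> Q)" by blast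
    ultimately show ?thesis using AXQ by (simp add: in_cl_iff)
  qed
  moreover have "rank ?S = rank A"
    using eA cl_mono[of A "A \<union> X"] AX by (auto simp: in_cl_iff)
  moreover have "rank (insert e X) \<le> rank (?S \<inter> ?T)" by (rule rank_mono) blast
  moreover have "rank ?T = rank (X \<union> Q)" using eXQ by (simp add: in_cl_iff)
  moreover have "rank (X \<union> Q) \<le> rank X + card Q" using rank_Un_le_card[OF Q] .
  moreover have "rank X \<le> rank (insert e X)" by (rule rank_mono) blast
  ultimately have "rank (insert e X) = rank X" by linarith
  then show ?thesis using eA by (simp add: in_cl_iff)
qed

end

section \<open>Critical tuples\<close>

definition block_below :: "(int \<Rightarrow> int set) \<Rightarrow> int \<Rightarrow> int \<Rightarrow> bool" where
  "block_below Block l j \<longleftrightarrow> (\<forall>a\<in>Block l. \<forall>b\<in>Block j. a < b)"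

lemma block_below_asym:
  "Block l \<noteq> {} \<Longrightarrow> Block j \<noteq> {} \<Longrightarrow> block_below Block l j \<Longrightarrow> \<not> block_below Block j l"
  unfolding block_below_def by force

context
  fixes Block Gd Bd :: "int \<Rightarrow> int set"
  assumes critical: "critical_tuple Block Gd Bd"
begin

lemma critical_tupleD:
  assumes "j \<le> i" "Block i \<noteq> {}" "Block j \<noteq> {}"
  shows "i \<in> Block i"
    and "j < i \<Longrightarrow> Block i = Block j \<or> block_below Block j i"
    and "Block i = Block j \<Longrightarrow> Gd i = Gd j"
    and "Bd i \<subseteq> Gd i"
    and "block_below Block j i \<Longrightarrow> Gd i \<subseteq> Bd j"
proof -
  have hyps: "j \<le> i \<and> Block i \<noteq> {} \<and> Block j \<noteq> {}" using assms by simp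
  have below: "block_below Block j i \<longleftrightarrow> (\<forall>a\<in>Block i. \<forall>b\<in>Block j. b < a)"
    unfolding block_below_def by blast
  note c = critical[unfolded critical_tuple_def, rule_format, of j i, OF hyps, unfolded Un_subset_iff]
  show "i \<in> Block i" using c by simp
  show "j < i \<Longrightarrow> Block i = Block j \<or> block_below Block j i"
    using c below by simp
  show "Block i = Block j \<Longrightarrow> Gd i = Gd j" using c by simp
  show "Bd i \<subseteq> Gd i" using c by simp
  show "block_below Block j i \<Longrightarrow> Gd i \<subseteq> Bd j"
    using c below by simp
qed

lemma critical_mem_Block: "Block l \<noteq> {} \<Longrightarrow> l \<in> Block l"
  using critical_tupleD(1)[of l l] by simp

lemma critical_Bd_subset_Gd: "Block l \<noteq> {} \<Longrightarrow> Bd l \<subseteq> Gd l"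
  using critical_tupleD(4)[of l l] by simp

lemma critical_block_cases:
  assumes "Block j \<noteq> {}" "Block l \<noteq> {}"
  obtains "Block l = Block j" | "block_below Block l j" | "block_below Block j l"
proof (cases rule: linorder_cases[of l j])
  case less
  then show ?thesis using critical_tupleD(2)[of l j] assms that by auto
next
  case greater
  then show ?thesis using critical_tupleD(2)[of j l] assms that by auto
qed (use that in simp)

lemma critical_same_block:
  assumes "Block j \<noteq> {}" "Block l = Block j"
  shows "Gd l = Gd j"
  using critical_tupleD(3)[of l j] critical_tupleD(3)[of j l] assms
  by (metis linorder_le_cases)

lemma critical_Gd_subset_Bd:
  assumes "Block j \<noteq> {}" "Block l \<noteq> {}" "block_below Block l j"
  shows "Gd j \<subseteq> Bd l"
proof (rule critical_tupleD(5))
  show "l \<le> j"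
    using assms critical_mem_Block[of l] critical_mem_Block[of j]
    unfolding block_below_def by fastforce
qed (use assms in auto)

end

section \<open>The Gap algorithm\<close>

lemma buckets_mono: "S \<subseteq> T \<Longrightarrow> buckets val X S \<subseteq> buckets val X T"
  unfolding buckets_def by blast

lemma OPT_indep_eq_sum:
  assumes "finite P" "P \<in> I" "\<forall>e\<in>P. val e \<ge> 0"
  shows "OPT I val P = sum val P"
  unfolding OPT_def
proof (rule Max_eqI)
  have "{sum val Y | Y. Y \<subseteq> P \<and> Y \<in> I} \<subseteq> sum val ` Pow P" by blast
  then show "finite {sum val Y | Y. Y \<subseteq> P \<and> Y \<in> I}"
    using assms(1) by (simp add: finite_subset)
next
  fix y assume "y \<in> {sum val Y | Y. Y \<subseteq> P \<and> Y \<in> I}"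
  then obtain Y where "Y \<subseteq> P" "y = sum val Y" by blast
  then show "y \<le> sum val P" using assms(1,3) by (auto intro: sum_mono2)
qed (use assms(2) in blast)

lemma sum_eq_sum_over_buckets:
  assumes "finite P" "finite J" "P \<subseteq> X"
    and "\<And>p. p \<in> P \<Longrightarrow> val p = 2 powr \<lfloor>log 2 (val p)\<rfloor> \<and> \<lfloor>log 2 (val p)\<rfloor> \<in> J"
  shows "sum val P = (\<Sum>j\<in>J. 2 powr j * card (P \<inter> bucket val X j))"
proof -
  have "sum val P = (\<Sum>j\<in>J. sum val {p \<in> P. \<lfloor>log 2 (val p)\<rfloor> = j})"
  proof (rule sum.group[symmetric, OF assms(1,2)])
    show "(\<lambda>p. \<lfloor>log 2 (val p)\<rfloor>) ` P \<subseteq> J" using assms(4) by blast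
  qed
  also have "\<dots> = (\<Sum>j\<in>J. sum (\<lambda>_. 2 powr j) (P \<inter> bucket val X j))"
  proof (rule sum.cong)
    fix j
    have "{p \<in> P. \<lfloor>log 2 (val p)\<rfloor> = j} = P \<inter> bucket val X j"
      using assms(3,4) unfolding bucket_def by auto
    then show "sum val {p \<in> P. \<lfloor>log 2 (val p)\<rfloor> = j} = sum (\<lambda>_. 2 powr j) (P \<inter> bucket val X j)"
      by (auto simp: bucket_def intro: sum.cong)
  qed simp
  finally show ?thesis by (simp add: mult.commute)
qed

locale gap_algorithm = finite_matroid U I
  for U :: "'a set" and I :: "'a set set" +
  fixes val :: "'a \<Rightarrow> real" and F :: "'a set" and Block Gd Bd :: "int \<Rightarrow> int set"
  assumes val_nonneg: "\<forall>e\<in>U. val e \<ge> 0"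
    and val_pow2: "\<forall>e\<in>U. val e > 0 \<longrightarrow> (\<exists>i::int. val e = 2 powr i)"
    and critical: "critical_tuple Block Gd Bd"
begin

abbreviation level :: "'a \<Rightarrow> int" where "level e \<equiv> \<lfloor>log 2 (val e)\<rfloor>"
abbreviation good :: "int \<Rightarrow> 'a set" where "good j \<equiv> buckets val F (Gd j)"
abbreviation bad :: "int \<Rightarrow> 'a set" where "bad j \<equiv> buckets val F (Bd j)"
abbreviation step :: "'a \<Rightarrow> 'a set \<Rightarrow> 'a set" where "step \<equiv> gap_step U I val F Block Gd Bd"
abbreviation run :: "'a list \<Rightarrow> 'a set" where "run xs \<equiv> fold step xs {}"

definition accepts :: "'a \<Rightarrow> 'a set \<Rightarrow> bool" where
  "accepts e P \<longleftrightarrow> val e \<noteq> 0 \<and> Block (level e) \<noteq> {} \<and> e \<in> cl (good (level e))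
     \<and> e \<notin> cl (P \<union> bad (level e))"

lemma step_eq: "step e P = (if accepts e P then insert e P else P)"
  by (simp add: gap_step_def accepts_def Let_def)

lemma accepts_ground: "accepts e P \<Longrightarrow> e \<in> U"
  using cl_subset_ground unfolding accepts_def by blast

lemma accepts_notin_cl: "accepts e P \<Longrightarrow> e \<notin> cl P"
  using cl_mono[of P "P \<union> bad (level e)"] unfolding accepts_def by blast

lemma accepts_val: "accepts e P \<Longrightarrow> val e = 2 powr level e"
proof -
  assume e: "accepts e P"
  then have "val e > 0" using accepts_ground val_nonneg unfolding accepts_def by force
  then obtain i :: int where "val e = 2 powr i" using val_pow2 accepts_ground[OF e] by blast
  then show ?thesis by simp
qed

lemma run_snoc: "run (xs @ [x]) = (if accepts x (run xs) then insert x (run xs) else run xs)"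
  by (simp only: fold_append fold_simps comp_def step_eq)

lemma run_subset_run_snoc: "run xs \<subseteq> run (xs @ [x])"
  unfolding run_snoc by auto

lemma run_indep_levels:
  "run xs \<in> I \<and> run xs \<subseteq> set xs \<and> (\<forall>p\<in>run xs. Block (level p) \<noteq> {} \<and> val p = 2 powr level p)"
proof (induction xs rule: rev_induct)
  case (snoc x xs)
  show ?case
  proof (cases "accepts x (run xs)")
    case True
    then have "insert x (run xs) \<in> I"
      using snoc.IH accepts_ground accepts_notin_cl by (blast intro: indep_insert_notin_cl)
    then show ?thesis unfolding run_snoc using snoc.IH True accepts_val
      by (auto simp: accepts_def)
  qed (use snoc.IH in \<open>unfold run_snoc, auto\<close>)
qed (simp add: empty_indep)

definition below_part :: "int \<Rightarrow> 'a set \<Rightarrow> 'a set" where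
  "below_part j P = {p \<in> P. block_below Block (level p) j}"

definition above_part :: "int \<Rightarrow> 'a set \<Rightarrow> 'a set" where
  "above_part j P = {p \<in> P. block_below Block j (level p)}"

definition same_part :: "int \<Rightarrow> 'a set \<Rightarrow> 'a set" where
  "same_part j P = {p \<in> P. Block (level p) = Block j}"

definition span_invariant :: "int \<Rightarrow> 'a set \<Rightarrow> bool" where
  "span_invariant j P \<longleftrightarrow> rank (good j \<union> P) = rank (good j) + card (below_part j P)
     \<and> P - below_part j P \<subseteq> cl (good j) \<and> above_part j P \<subseteq> cl (bad j)"

lemma accepts_below_notin_cl:
  assumes j: "Block j \<noteq> {}" and x: "accepts x P" and below: "block_below Block (level x) j"
  shows "x \<notin> cl (good j \<union> P)"
proof -
  have "Block (level x) \<noteq> {}" using x unfolding accepts_def by blast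
  then have "good j \<subseteq> bad (level x)"
    by (intro buckets_mono critical_Gd_subset_Bd[OF critical j _ below])
  then have "cl (good j \<union> P) \<subseteq> cl (P \<union> bad (level x))" by (intro cl_mono) blast
  moreover have "x \<notin> cl (P \<union> bad (level x))" using x unfolding accepts_def by simp
  ultimately show ?thesis by blast
qed

lemma accepts_not_below_in_cl:
  assumes j: "Block j \<noteq> {}" and x: "accepts x P" and not_below: "\<not> block_below Block (level x) j"
  shows "x \<in> cl (good j)" and "block_below Block j (level x) \<Longrightarrow> x \<in> cl (bad j)"
proof -
  have l: "Block (level x) \<noteq> {}" and xl: "x \<in> cl (good (level x))"
    using x unfolding accepts_def by blast+
  show above: "x \<in> cl (bad j)" if "block_below Block j (level x)"
  proof -
    have "good (level x) \<subseteq> bad j"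
      by (intro buckets_mono critical_Gd_subset_Bd[OF critical l j that])
    then have "cl (good (level x)) \<subseteq> cl (bad j)" by (rule cl_mono)
    then show ?thesis using xl by (rule subsetD)
  qed
  show "x \<in> cl (good j)"
  proof (cases rule: critical_block_cases[OF critical j l])
    case 1
    then show ?thesis using xl critical_same_block[OF critical j 1] by simp
  next
    case 3
    have "bad j \<subseteq> good j" by (intro buckets_mono critical_Bd_subset_Gd[OF critical j])
    then have "cl (bad j) \<subseteq> cl (good j)" by (rule cl_mono)
    then show ?thesis using above[OF 3] by (rule subsetD)
  qed (use not_below in simp)
qed

lemma span_invariant_step:
  assumes j: "Block j \<noteq> {}" and P: "finite P" and inv: "span_invariant j P"
  shows "span_invariant j (step x P)"
proof (cases "accepts x P")
  case True
  note x = True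
  have xP: "x \<notin> P" using accepts_notin_cl[OF x] mem_cl[OF accepts_ground[OF x]] by blast
  show ?thesis
  proof (cases "block_below Block (level x) j")
    case below: True
    have "rank (good j \<union> insert x P) = Suc (rank (good j \<union> P))"
      using rank_insert_notin_cl[OF accepts_ground[OF x] accepts_below_notin_cl[OF j x below]] by simp
    moreover have "below_part j (insert x P) = insert x (below_part j P)"
      using below unfolding below_part_def by auto
    moreover have "x \<notin> below_part j P" using xP unfolding below_part_def by blast
    moreover have "\<not> block_below Block j (level x)"
      using block_below_asym below j x unfolding accepts_def by blast
    ultimately show ?thesis
      using inv P x unfolding span_invariant_def above_part_def by (auto simp: step_eq below_part_def)
  next
    case not_below: False
    note x_cl = accepts_not_below_in_cl[OF j x not_below]
    have "rank (good j \<union> insert x P) = rank (good j \<union> P)"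
      using x_cl(1) cl_mono[of "good j" "good j \<union> P"] by (auto simp: in_cl_iff)
    moreover have "below_part j (insert x P) = below_part j P"
      using not_below unfolding below_part_def by auto
    ultimately show ?thesis
      using inv x x_cl unfolding span_invariant_def above_part_def by (auto simp: step_eq below_part_def)
  qed
qed (use inv in \<open>simp add: step_eq\<close>)

lemma rejected_in_cl:
  assumes j: "Block j \<noteq> {}" and P: "finite P" "\<forall>p\<in>P. Block (level p) \<noteq> {}"
    and inv: "span_invariant j P"
    and x: "val x \<noteq> 0" "level x = j" "x \<in> cl (good j)" and rejected: "\<not> accepts x P"
  shows "x \<in> cl (bad j \<union> same_part j P)"
proof -
  let ?Q = "below_part j P" and ?X = "(P - below_part j P) \<union> bad j"
  have bad_good: "bad j \<subseteq> good j" by (intro buckets_mono critical_Bd_subset_Gd[OF critical j])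
  have "x \<in> cl (P \<union> bad j)" using rejected x j unfolding accepts_def by auto
  moreover have "?X \<union> ?Q = P \<union> bad j" unfolding below_part_def by blast
  moreover have "rank (good j \<union> ?X) = rank (good j)"
  proof -
    have "good j \<union> ?X = good j \<union> (P - below_part j P)" using bad_good by blast
    then show ?thesis using inv rank_Un_cl unfolding span_invariant_def by simp
  qed
  moreover have "rank (good j \<union> ?X \<union> ?Q) = rank (good j) + card ?Q"
  proof -
    have "good j \<union> ?X \<union> ?Q = good j \<union> P" using bad_good unfolding below_part_def by blast
    then show ?thesis using inv unfolding span_invariant_def by simp
  qed
  moreover have "finite ?Q" using P(1) unfolding below_part_def by simp
  ultimately have "x \<in> cl ?X" using cl_skew_cancel x(3) by simp
  moreover have "?X \<subseteq> (bad j \<union> same_part j P) \<union> above_part j P"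
  proof
    fix p assume "p \<in> ?X"
    then show "p \<in> (bad j \<union> same_part j P) \<union> above_part j P"
      using critical_block_cases[OF critical j, of "level p"] P(2)
      unfolding below_part_def same_part_def above_part_def by blast
  qed
  moreover have "above_part j P \<subseteq> cl (bad j \<union> same_part j P)"
    using inv cl_mono[of "bad j" "bad j \<union> same_part j P"] unfolding span_invariant_def by blast
  ultimately show ?thesis using cl_mono cl_Un_cl by blast
qed

lemma run_invariant:
  assumes j: "Block j \<noteq> {}"
  shows "span_invariant j (run xs)
    \<and> (\<forall>e\<in>set xs. e \<in> bucket val (U - F) j \<and> e \<in> cl (good j)
          \<longrightarrow> e \<in> cl (bad j \<union> same_part j (run xs)))"
proof (induction xs rule: rev_induct)
  case Nil
  show ?case by (simp add: span_invariant_def below_part_def above_part_def)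
next
  case (snoc x xs)
  let ?P = "run xs"
  have P: "finite ?P" "\<forall>p\<in>?P. Block (level p) \<noteq> {}"
    using run_indep_levels[of xs] indep_finite by blast+
  have grow: "cl (bad j \<union> same_part j ?P) \<subseteq> cl (bad j \<union> same_part j (run (xs @ [x])))"
    using run_subset_run_snoc[of xs x] by (intro cl_mono) (auto simp: same_part_def)
  have "x \<in> cl (bad j \<union> same_part j (run (xs @ [x])))"
    if x: "x \<in> bucket val (U - F) j" "x \<in> cl (good j)"
  proof -
    have "val x = 2 powr j" "x \<in> U" using x unfolding bucket_def by auto
    then have "val x \<noteq> 0" "level x = j" by simp_all
    show ?thesis
    proof (cases "accepts x ?P")
      case True
      then have "x \<in> same_part j (run (xs @ [x]))"
        using \<open>level x = j\<close> unfolding run_snoc same_part_def by simp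
      then show ?thesis using \<open>x \<in> U\<close> mem_cl by blast
    next
      case False
      then show ?thesis
        using rejected_in_cl[OF j P _ \<open>val x \<noteq> 0\<close> \<open>level x = j\<close> x(2)] snoc.IH grow by blast
    qed
  qed
  moreover have "span_invariant j (run (xs @ [x]))"
    using span_invariant_step[OF j P(1)] snoc.IH by simp
  ultimately show ?case using snoc.IH grow by auto
qed

lemma bucket_bound:
  assumes j: "Block j \<noteq> {}" and order: "set \<sigma> = U - F"
  shows "uncov I (bad j \<union> buckets val (U - F) (Block j - {j})) (bucket val (U - F) j)
           - int (indep_rk U I (good j) (bucket val (U - F) j))
         \<le> int (card (run \<sigma> \<inter> bucket val (U - F) j))"
proof -
  let ?P = "run \<sigma>" and ?S = "bucket val (U - F) j"
  let ?R = "bad j \<union> buckets val (U - F) (Block j - {j})"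
  let ?Pj = "?P \<inter> ?S" and ?T = "?S \<inter> cl (good j)"
  have P: "finite ?P" "?P \<subseteq> U - F" "\<forall>p\<in>?P. Block (level p) \<noteq> {} \<and> val p = 2 powr level p"
    using run_indep_levels[of \<sigma>] indep_finite order by blast+
  have "bad j \<union> same_part j ?P \<subseteq> ?R \<union> ?Pj"
  proof
    fix p assume "p \<in> bad j \<union> same_part j ?P"
    moreover have "level p \<in> Block j" if "p \<in> same_part j ?P"
      using that critical_mem_Block[OF critical, of "level p"] j unfolding same_part_def by auto
    ultimately show "p \<in> ?R \<union> ?Pj"
      using P(2,3) unfolding same_part_def buckets_def bucket_def by auto
  qed
  moreover have "?T \<subseteq> cl (bad j \<union> same_part j ?P)"
    using run_invariant[OF j, of \<sigma>] order unfolding bucket_def by blast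
  ultimately have T: "?T \<subseteq> cl (?R \<union> ?Pj)" using cl_mono by blast
  have "rank (?R \<union> ?T) \<le> rank (?R \<union> ?Pj \<union> ?T)" by (rule rank_mono) blast
  also have "\<dots> = rank (?R \<union> ?Pj)" using rank_Un_cl[OF T] .
  also have "\<dots> \<le> rank ?R + card ?Pj" using P(1) by (intro rank_Un_le_card) simp
  finally have "rank (?R \<union> ?T) \<le> rank ?R + card ?Pj" .
  moreover have "rank (?R \<union> ?S) \<le> rank (?R \<union> ?T) + rank (?S - cl (good j))"
  proof -
    have "?R \<union> ?S = (?R \<union> ?T) \<union> (?S - cl (good j))" by blast
    then show ?thesis using rank_Un_le by simp
  qed
  ultimately show ?thesis by (simp add: uncov_def indep_rk_def)
qed

lemma run_value_bound:
  assumes order: "set \<sigma> = U - F"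
  shows "(\<Sum>j\<in>{j. Block j \<noteq> {} \<and> bucket val (U - F) j \<noteq> {}}.
           2 powr j * (real_of_int (uncov I (bad j \<union> buckets val (U - F) (Block j - {j}))
                                             (bucket val (U - F) j))
                       - real (indep_rk U I (good j) (bucket val (U - F) j))))
         \<le> OPT I val (run \<sigma>)"
    (is "sum ?f ?J \<le> _")
proof -
  let ?P = "run \<sigma>"
  have P: "?P \<in> I" "?P \<subseteq> U - F" "\<forall>p\<in>?P. Block (level p) \<noteq> {} \<and> val p = 2 powr level p"
    using run_indep_levels[of \<sigma>] order by blast+
  have "?J \<subseteq> level ` U"
  proof
    fix j assume "j \<in> ?J"
    then obtain e where "e \<in> U" "val e = 2 powr j" unfolding bucket_def by auto
    then show "j \<in> level ` U" by force
  qed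
  then have J: "finite ?J" using finite_ground finite_surj by blast
  have levels: "val p = 2 powr level p \<and> level p \<in> ?J" if "p \<in> ?P" for p
    using P that unfolding bucket_def by blast
  have "sum ?f ?J \<le> (\<Sum>j\<in>?J. 2 powr j * card (?P \<inter> bucket val (U - F) j))"
  proof (intro sum_mono mult_left_mono)
    fix j assume "j \<in> ?J"
    then show "real_of_int (uncov I (bad j \<union> buckets val (U - F) (Block j - {j})) (bucket val (U - F) j))
        - real (indep_rk U I (good j) (bucket val (U - F) j)) \<le> card (?P \<inter> bucket val (U - F) j)"
      using bucket_bound[OF _ order, of j] by (simp flip: of_int_le_iff)
  qed simp
  also have "\<dots> = sum val ?P"
    using sum_eq_sum_over_buckets[OF indep_finite[OF P(1)] J P(2) levels] by simp
  also have "\<dots> = OPT I val ?P"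
  proof -
    have "\<forall>e\<in>?P. val e \<ge> 0" using P(2) val_nonneg by blast
    then show ?thesis using OPT_indep_eq_sum[OF indep_finite[OF P(1)] P(1)] by simp
  qed
  finally show ?thesis .
qed

end

theorem theorem2:
  fixes U :: "'a set" and \<I> :: "'a set set" and val :: "'a \<Rightarrow> real" and F :: "'a set"
    and Block Gd Bd :: "int \<Rightarrow> int set" and \<sigma> :: "'a list"
  assumes M: "matroid U \<I>"
    and F: "F \<subseteq> U"
    and val_nonneg: "\<forall>e\<in>U. val e \<ge> 0"
    and rank0: "\<forall>e\<in>U. mrank \<I> {e} = 0 \<longrightarrow> val e = 0"
    and pow2: "\<forall>e\<in>U. val e > 0 \<longrightarrow> (\<exists>i::int. val e = 2 powr (real_of_int i))"
    and crit: "critical_tuple Block Gd Bd"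
    and order: "distinct \<sigma>" "set \<sigma> = U - F"
  shows "gap_alg U \<I> val F Block Gd Bd \<sigma> \<in> \<I>
    \<and> gap_alg U \<I> val F Block Gd Bd \<sigma> \<subseteq> U - F
    \<and> OPT \<I> val (gap_alg U \<I> val F Block Gd Bd \<sigma>) \<ge>
       (\<Sum>j\<in>{j. Block j \<noteq> {} \<and> bucket val (U - F) j \<noteq> {}}.
          2 powr (real_of_int j) *
            (real_of_int (uncov \<I> (buckets val F (Bd j) \<union> buckets val (U - F) (Block j - {j}))
                                  (bucket val (U - F) j))
             - real (indep_rk U \<I> (buckets val F (Gd j)) (bucket val (U - F) j))))"
proof -
  interpret gap_algorithm U \<I> val F Block Gd Bd
    using M val_nonneg pow2 crit by unfold_locales
  show ?thesis
    using run_indep_levels[of \<sigma>] run_value_bound[OF order(2)] order(2) unfolding gap_alg_def by blast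
qed

end
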